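(* Let $P,Q\in\Gamma_n$ and $0<r\le R$ with $r\le p_i/q_i\le R$ for all $i$. Let $s,t\in\mathbb{R}$. If $s\ge-1$ and $t\ge-1$, then $$r^{t+1}\Big(\frac{r+1}{2}\Big)^{s-t}\Omega_t(P\|Q)\le\Omega_s(Q\|P)\le R^{t+1}\Big(\frac{R+1}{2}\Big)^{s-t}\Omega_t(P\|Q).$$ If $s\le-1$ and $t\le-1$, then $$R^{t+1}\Big(\frac{R+1}{2}\Big)^{s-t}\Omega_t(P\|Q)\le\Omega_s(Q\|P)\le r^{t+1}\Big(\frac{r+1}{2}\Big)^{s-t}\Omega_t(P\|Q).$$
   Context: $\Gamma_n=\{P=(p_1,\dots,p_n): p_i>0,\ \sum_i p_i=1\}$, $n\ge2$. For $P,Q\in\Gamma_n$ and $s\in\mathbb{R}$: $\Omega_s(P\|Q)=[s(s-1)]^{-1}\big[\sum_i p_i\big(\frac{p_i+q_i}{2p_i}\big)^s-1\big]$ for $s\ne0,1$; $\Omega_0(P\|Q)=\sum_i p_i\ln\frac{2p_i}{p_i+q_i}$; $\Omega_1(P\|Q)=\sum_i\frac{p_i+q_i}{2}\ln\frac{p_i+q_i}{2p_i}$. $\Omega_s(Q\|P)$ is obtained by interchanging $p_i$ and $q_i$ in these formulas. *)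

theory Defs
  imports Complex_Main
begin

definition Gamma :: "nat \<Rightarrow> (nat \<Rightarrow> real) set" where
  "Gamma n = {p. (\<forall>i<n. p i > 0) \<and> (\<Sum>i<n. p i) = 1}"

text \<open>Omega_s(P||Q) as in the paper; Omega s n q p is Omega_s(Q||P).\<close>
definition Omega :: "real \<Rightarrow> nat \<Rightarrow> (nat \<Rightarrow> real) \<Rightarrow> (nat \<Rightarrow> real) \<Rightarrow> real" where
  "Omega s n p q =
    (if s = 0 then (\<Sum>i<n. p i * ln (2 * p i / (p i + q i)))
     else if s = 1 then (\<Sum>i<n. (p i + q i) / 2 * ln ((p i + q i) / (2 * p i)))
     else ((\<Sum>i<n. p i * ((p i + q i) / (2 * p i)) powr s) - 1) / (s * (s - 1)))"

end

(*
  Both sides are Csiszar f-divergences in the ratios u_i = p_i / q_i: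
  Omega_s(Q||P) = sum q_i f_s(u_i) with f_s(u) depending only on (1 + u) / 2, and
  Omega_t(P||Q) = sum q_i f_t*(u_i) with the dual generator f*(u) = u f(1/u).
  The ratio of the second derivatives f_s'' / f_t*'' is u^(t+1) ((u+1)/2)^(s-t), which is
  monotone in u when s, t are both >= -1 or both <= -1, hence lies between its values at r
  and R.  If m <= f_s'' / f_t*'' <= M on [r, R], then f_s - m f_t* and M f_t* - f_s are
  convex there and vanish at 1; a convex h with h(1) = 0 lies above its tangent at 1, and
  summing the tangent against the weights q_i gives h'(1) (sum p - sum q) = 0, so its
  divergence is nonnegative.  Finally r <= 1 <= R because both distributions sum to 1.
*)
theory Submission
  imports Defs
begin

lemma second_deriv_nonneg_imp_above_tangent:
  fixes h h' h'' :: "real \<Rightarrow> real"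
  assumes h': "\<And>x. x \<in> {a..b} \<Longrightarrow> (h has_real_derivative h' x) (at x)"
    and h'': "\<And>x. x \<in> {a..b} \<Longrightarrow> (h' has_real_derivative h'' x) (at x)"
    and nonneg: "\<And>x. x \<in> {a..b} \<Longrightarrow> 0 \<le> h'' x"
    and "c \<in> {a..b}" "x \<in> {a..b}"
  shows "h c + h' c * (x - c) \<le> h x"
proof (cases "x = c")
  case False
  let ?diff = "\<lambda>m. [h, h', h''] ! m"
  have "\<forall>m t. m < 2 \<and> a \<le> t \<and> t \<le> b \<longrightarrow> (?diff m has_real_derivative ?diff (Suc m) t) (at t)"
    using h' h'' by (auto simp: less_2_cases_iff)
  then obtain t where "if x < c then x < t \<and> t < c else c < t \<and> t < x"
    and taylor: "h x = (\<Sum>m<2. ?diff m c / fact m * (x - c) ^ m) + ?diff 2 t / fact 2 * (x - c)\<^sup>2"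
    using Taylor[of 2 ?diff h a b c x] assms False by auto
  then have "t \<in> {a..b}"
    using assms by (auto split: if_splits)
  then have "0 \<le> h'' t / 2 * (x - c)\<^sup>2"
    using nonneg by simp
  then show ?thesis
    using taylor by (simp add: eval_nat_numeral)
qed simp

definition f_divergence :: "(real \<Rightarrow> real) \<Rightarrow> nat \<Rightarrow> (nat \<Rightarrow> real) \<Rightarrow> (nat \<Rightarrow> real) \<Rightarrow> real" where
  "f_divergence f n p q = (\<Sum>i<n. q i * f (p i / q i))"

lemma f_divergence_nonneg:
  fixes h h' h'' :: "real \<Rightarrow> real"
  assumes h': "\<And>x. x \<in> {a..b} \<Longrightarrow> (h has_real_derivative h' x) (at x)"
    and h'': "\<And>x. x \<in> {a..b} \<Longrightarrow> (h' has_real_derivative h'' x) (at x)"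
    and nonneg: "\<And>x. x \<in> {a..b} \<Longrightarrow> 0 \<le> h'' x"
    and "1 \<in> {a..b}" "h 1 = 0"
    and sums: "(\<Sum>i<n. p i) = (\<Sum>i<n. q i)"
    and ratios: "\<forall>i<n. 0 < q i \<and> p i / q i \<in> {a..b}"
  shows "0 \<le> f_divergence h n p q"
proof -
  have tangent: "h' 1 * (p i - q i) \<le> q i * h (p i / q i)" if "i < n" for i
  proof -
    have "0 < q i"
      using ratios that by simp
    have "q i * (h' 1 * (p i / q i - 1)) \<le> q i * h (p i / q i)"
      using second_deriv_nonneg_imp_above_tangent[where a=a and b=b, OF h' h'' nonneg, of 1 "p i / q i"]
        assms that
      by (intro mult_left_mono) auto
    moreover have "q i * (p i / q i - 1) = p i - q i"
      using \<open>0 < q i\<close> by (simp add: field_simps)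
    ultimately show ?thesis
      by (simp add: mult.left_commute)
  qed
  have "0 = h' 1 * ((\<Sum>i<n. p i) - (\<Sum>i<n. q i))"
    using sums by simp
  also have "\<dots> = (\<Sum>i<n. h' 1 * (p i - q i))"
    by (simp add: right_diff_distrib sum_distrib_left sum_subtractf)
  also have "\<dots> \<le> f_divergence h n p q"
    unfolding f_divergence_def using tangent by (intro sum_mono) auto
  finally show ?thesis .
qed

lemma f_divergence_linear:
  "f_divergence (\<lambda>u. \<alpha> * f u - \<beta> * g u) n p q = \<alpha> * f_divergence f n p q - \<beta> * f_divergence g n p q"
  unfolding f_divergence_def
  by (simp add: sum_subtractf sum_distrib_left right_diff_distrib mult.left_commute)

definition csiszar_dual :: "(real \<Rightarrow> real) \<Rightarrow> real \<Rightarrow> real" where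
  "csiszar_dual f u = u * f (1 / u)"

lemma f_divergence_csiszar_dual:
  assumes "\<forall>i<n. q i \<noteq> 0"
  shows "f_divergence (csiszar_dual f) n p q = f_divergence f n q p"
  unfolding f_divergence_def csiszar_dual_def using assms by (intro sum.cong) auto

lemma csiszar_dual_has_derivative:
  assumes "u \<noteq> 0" "(f has_real_derivative f' (1 / u)) (at (1 / u))"
  shows "(csiszar_dual f has_real_derivative f (1 / u) - f' (1 / u) / u) (at u)"
proof -
  have "((\<lambda>u. f (1 / u)) has_real_derivative f' (1 / u) * (- 1 / u\<^sup>2)) (at u)"
    using assms by (intro DERIV_chain2[of f "f' (1 / u)" "\<lambda>u. 1 / u", OF assms(2)])
      (auto intro!: derivative_eq_intros simp: power2_eq_square)
  then have "((\<lambda>u. u * f (1 / u)) has_real_derivative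
      u * (f' (1 / u) * (- 1 / u\<^sup>2)) + 1 * f (1 / u)) (at u)"
    by (rule DERIV_mult'[OF DERIV_ident])
  then show ?thesis
    using assms by (simp add: csiszar_dual_def[abs_def] power2_eq_square field_simps)
qed

lemma csiszar_dual_has_second_derivative:
  assumes "u \<noteq> 0" "(f has_real_derivative f' (1 / u)) (at (1 / u))"
    and "(f' has_real_derivative f'') (at (1 / u))"
  shows "((\<lambda>u. f (1 / u) - f' (1 / u) / u) has_real_derivative f'' / u ^ 3) (at u)"
proof -
  have inv: "((\<lambda>u. 1 / u) has_real_derivative - 1 / u\<^sup>2) (at u)"
    using assms(1) by (auto intro!: derivative_eq_intros simp: power2_eq_square)
  have "((\<lambda>u. f (1 / u) - f' (1 / u) * (1 / u)) has_real_derivative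
      f' (1 / u) * (- 1 / u\<^sup>2) - (f'' * (- 1 / u\<^sup>2) * (1 / u) + - 1 / u\<^sup>2 * f' (1 / u))) (at u)"
    by (intro DERIV_diff DERIV_mult DERIV_chain2[OF assms(2) inv] DERIV_chain2[OF assms(3) inv] inv)
  then show ?thesis
    using assms(1) by (simp add: power2_eq_square power3_eq_cube field_simps)
qed

definition omega_gen :: "real \<Rightarrow> real \<Rightarrow> real" where
  "omega_gen s u =
    (if s = 0 then - ln ((1 + u) / 2)
     else if s = 1 then (1 + u) / 2 * ln ((1 + u) / 2)
     else (((1 + u) / 2) powr s - 1) / (s * (s - 1)))"

definition omega_gen_deriv :: "real \<Rightarrow> real \<Rightarrow> real" where
  "omega_gen_deriv s u =
    (if s = 0 then - 1 / (1 + u)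
     else if s = 1 then (ln ((1 + u) / 2) + 1) / 2
     else ((1 + u) / 2) powr (s - 1) / (2 * (s - 1)))"

lemma omega_gen_one [simp]: "omega_gen s 1 = 0"
  by (simp add: omega_gen_def)

lemma omega_gen_has_derivative:
  assumes "0 < u"
  shows "(omega_gen s has_real_derivative omega_gen_deriv s u) (at u)"
proof -
  consider "s = 0" | "s = 1" | "s \<noteq> 0" "s \<noteq> 1" by blast
  then show ?thesis
  proof cases
    case 1
    have "((\<lambda>u. - ln ((1 + u) / 2)) has_real_derivative - 1 / (1 + u)) (at u)"
      using assms by (auto intro!: derivative_eq_intros simp: field_simps)
    then show ?thesis
      using 1 by (simp add: omega_gen_def[abs_def] omega_gen_deriv_def)
  next
    case 2
    have "((\<lambda>u. (1 + u) / 2 * ln ((1 + u) / 2)) has_real_derivative (ln ((1 + u) / 2) + 1) / 2) (at u)"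
      using assms by (auto intro!: derivative_eq_intros simp: field_simps)
    then show ?thesis
      using 2 by (simp add: omega_gen_def[abs_def] omega_gen_deriv_def)
  next
    case 3
    have "((\<lambda>u. (((1 + u) / 2) powr s - 1) / (s * (s - 1))) has_real_derivative
        ((1 + u) / 2) powr (s - 1) / (2 * (s - 1))) (at u)"
      using assms 3
      by (auto intro!: derivative_eq_intros simp: powr_diff divide_simps) (simp add: algebra_simps)
    then show ?thesis
      using 3 by (simp add: omega_gen_def[abs_def] omega_gen_deriv_def)
  qed
qed

lemma omega_gen_deriv_has_derivative:
  assumes "0 < u"
  shows "(omega_gen_deriv s has_real_derivative ((1 + u) / 2) powr (s - 2) / 4) (at u)"
proof -
  consider "s = 0" | "s = 1" | "s \<noteq> 0" "s \<noteq> 1" by blast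
  then show ?thesis
  proof cases
    case 1
    have "((\<lambda>u. - 1 / (1 + u)) has_real_derivative ((1 + u) / 2) powr (s - 2) / 4) (at u)"
      using assms 1
      by (auto intro!: derivative_eq_intros simp: powr_minus divide_simps power2_eq_square)
    then show ?thesis
      using 1 by (simp add: omega_gen_deriv_def[abs_def])
  next
    case 2
    have "((\<lambda>u. (ln ((1 + u) / 2) + 1) / 2) has_real_derivative ((1 + u) / 2) powr (s - 2) / 4) (at u)"
      using assms 2 by (auto intro!: derivative_eq_intros simp: field_simps powr_minus)
    then show ?thesis
      using 2 by (simp add: omega_gen_deriv_def[abs_def])
  next
    case 3
    have "((\<lambda>u. ((1 + u) / 2) powr (s - 1) / (2 * (s - 1))) has_real_derivative
        ((1 + u) / 2) powr (s - 2) / 4) (at u)"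
      using assms 3 by (auto intro!: derivative_eq_intros) (simp add: field_simps powr_diff)
    then show ?thesis
      using 3 by (simp add: omega_gen_deriv_def[abs_def])
  qed
qed

lemma Omega_eq_f_divergence:
  assumes "p \<in> Gamma n" "q \<in> Gamma n"
  shows "Omega s n q p = f_divergence (omega_gen s) n p q"
proof -
  have pos: "0 < p i" "0 < q i" if "i \<in> {..<n}" for i
    using assms that by (auto simp: Gamma_def)
  have mid: "(1 + p i / q i) / 2 = (q i + p i) / (2 * q i)" if "i \<in> {..<n}" for i
    using pos[OF that] by (simp add: field_simps)
  have sum_q: "(\<Sum>i<n. q i) = 1"
    using assms(2) by (simp add: Gamma_def)
  consider "s = 0" | "s = 1" | "s \<noteq> 0" "s \<noteq> 1" by blast
  then show ?thesis
  proof cases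
    case 1
    have "q i * omega_gen s (p i / q i) = q i * ln (2 * q i / (q i + p i))" if "i \<in> {..<n}" for i
      unfolding omega_gen_def mid[OF that] using 1 pos[OF that] by (simp add: ln_div)
    then have "f_divergence (omega_gen s) n p q = (\<Sum>i<n. q i * ln (2 * q i / (q i + p i)))"
      unfolding f_divergence_def by (rule sum.cong[OF refl])
    with 1 show ?thesis
      by (simp add: Omega_def)
  next
    case 2
    have "q i * omega_gen s (p i / q i) = (q i + p i) / 2 * ln ((q i + p i) / (2 * q i))"
      if "i \<in> {..<n}" for i
      unfolding omega_gen_def mid[OF that] using 2 pos[OF that] by simp
    then have "f_divergence (omega_gen s) n p q = (\<Sum>i<n. (q i + p i) / 2 * ln ((q i + p i) / (2 * q i)))"
      unfolding f_divergence_def by (rule sum.cong[OF refl])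
    with 2 show ?thesis
      by (simp add: Omega_def)
  next
    case 3
    have "q i * omega_gen s (p i / q i) = (q i * ((q i + p i) / (2 * q i)) powr s - q i) / (s * (s - 1))"
      if "i \<in> {..<n}" for i
      unfolding omega_gen_def mid[OF that] using 3 by (simp add: right_diff_distrib)
    then have "f_divergence (omega_gen s) n p q
        = (\<Sum>i<n. (q i * ((q i + p i) / (2 * q i)) powr s - q i) / (s * (s - 1)))"
      unfolding f_divergence_def by (rule sum.cong[OF refl])
    with 3 sum_q show ?thesis
      by (simp add: Omega_def sum_divide_distrib[symmetric] sum_subtractf)
  qed
qed

lemma Omega_eq_f_divergence_csiszar_dual:
  assumes "p \<in> Gamma n" "q \<in> Gamma n"
  shows "Omega t n p q = f_divergence (csiszar_dual (omega_gen t)) n p q"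
  unfolding Omega_eq_f_divergence[OF assms(2,1)] using assms(2)
  by (intro f_divergence_csiszar_dual[symmetric]) (auto simp: Gamma_def)

definition omega_ratio :: "real \<Rightarrow> real \<Rightarrow> real \<Rightarrow> real" where
  "omega_ratio s t u = u powr (t + 1) * ((u + 1) / 2) powr (s - t)"

lemma omega_ratio_second_derivatives:
  assumes "0 < u"
  shows "((1 + u) / 2) powr (s - 2) / 4 = omega_ratio s t u * (((1 + 1 / u) / 2) powr (t - 2) / 4 / u ^ 3)"
proof -
  define w where "w = (1 + u) / 2"
  have "0 < w"
    using assms by (simp add: w_def)
  have "(1 + 1 / u) / 2 = w / u"
    using assms by (simp add: w_def field_simps)
  then have dual: "((1 + 1 / u) / 2) powr (t - 2) = w powr (t - 2) / u powr (t - 2)"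
    using assms \<open>0 < w\<close> by (simp add: powr_divide)
  have "u powr (t + 1) = u powr (t - 2) * u powr 3"
    by (simp add: powr_add[symmetric] add.commute)
  then have u_pow: "u powr (t + 1) = u powr (t - 2) * u ^ 3"
    using assms by (simp add: powr_realpow)
  have w_pow: "w powr (s - t) * w powr (t - 2) = w powr (s - 2)"
    by (simp add: powr_add[symmetric])
  have "omega_ratio s t u * (((1 + 1 / u) / 2) powr (t - 2) / 4 / u ^ 3)
      = u powr (t - 2) * u ^ 3 * w powr (s - t) * (w powr (t - 2) / u powr (t - 2) / 4 / u ^ 3)"
    unfolding omega_ratio_def dual u_pow by (simp add: w_def add.commute)
  also have "\<dots> = w powr (s - 2) / 4"
    using assms by (simp add: w_pow[symmetric] field_simps)
  finally show ?thesis
    by (simp add: w_def)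
qed

lemma Omega_comparison:
  assumes p: "p \<in> Gamma n" and q: "q \<in> Gamma n"
    and "0 < a" "a \<le> 1" "1 \<le> b"
    and ratios: "\<forall>i<n. a \<le> p i / q i \<and> p i / q i \<le> b"
    and ratio_bound: "\<And>x. x \<in> {a..b} \<Longrightarrow> \<beta> \<le> \<alpha> * omega_ratio s t x"
  shows "\<beta> * Omega t n p q \<le> \<alpha> * Omega s n q p"
proof -
  define h where "h x = \<alpha> * omega_gen s x - \<beta> * csiszar_dual (omega_gen t) x" for x
  define h' where
    "h' x = \<alpha> * omega_gen_deriv s x - \<beta> * (omega_gen t (1 / x) - omega_gen_deriv t (1 / x) / x)" for x
  define dual'' where "dual'' x = ((1 + 1 / x) / 2) powr (t - 2) / 4 / x ^ 3" for x
  define h'' where "h'' x = \<alpha> * (((1 + x) / 2) powr (s - 2) / 4) - \<beta> * dual'' x" for x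
  have "0 \<le> f_divergence h n p q"
  proof (rule f_divergence_nonneg)
    fix x :: real
    assume "x \<in> {a..b}"
    then have "0 < x"
      using \<open>0 < a\<close> by simp
    show "(h has_real_derivative h' x) (at x)"
      unfolding h_def[abs_def] h'_def using \<open>0 < x\<close>
      by (intro DERIV_diff DERIV_cmult omega_gen_has_derivative csiszar_dual_has_derivative) simp_all
    show "(h' has_real_derivative h'' x) (at x)"
      unfolding h'_def[abs_def] h''_def dual''_def using \<open>0 < x\<close>
      by (intro DERIV_diff DERIV_cmult omega_gen_deriv_has_derivative csiszar_dual_has_second_derivative
          omega_gen_has_derivative) simp_all
    have "h'' x = dual'' x * (\<alpha> * omega_ratio s t x - \<beta>)"
      unfolding h''_def omega_ratio_second_derivatives[OF \<open>0 < x\<close>, of s t] dual''_def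
      by (simp add: diff_divide_distrib algebra_simps)
    moreover have "0 \<le> dual'' x"
      using \<open>0 < x\<close> by (simp add: dual''_def)
    ultimately show "0 \<le> h'' x"
      using ratio_bound[OF \<open>x \<in> {a..b}\<close>] by simp
  next
    show "(\<Sum>i<n. p i) = (\<Sum>i<n. q i)" "\<forall>i<n. 0 < q i \<and> p i / q i \<in> {a..b}"
      using p q ratios by (auto simp: Gamma_def)
  qed (use assms in \<open>simp_all add: h_def csiszar_dual_def\<close>)
  also have "f_divergence h n p q = \<alpha> * Omega s n q p - \<beta> * Omega t n p q"
    unfolding h_def[abs_def] f_divergence_linear Omega_eq_f_divergence[OF p q]
      Omega_eq_f_divergence_csiszar_dual[OF p q] ..
  finally show ?thesis
    by simp
qed

lemma omega_ratio_eq: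
  assumes "0 < u"
  shows "omega_ratio s t u = (u / ((u + 1) / 2)) powr (t + 1) * ((u + 1) / 2) powr (s + 1)"
proof -
  define w where "w = (u + 1) / 2"
  have "0 < w"
    using assms by (simp add: w_def)
  have "(u / w) powr (t + 1) * w powr (s + 1) = u powr (t + 1) * (w powr (s + 1) / w powr (t + 1))"
    using assms \<open>0 < w\<close> by (simp add: powr_divide)
  also have "w powr (s + 1) / w powr (t + 1) = w powr (s - t)"
    by (simp add: powr_diff[symmetric])
  finally show ?thesis
    unfolding omega_ratio_def w_def[symmetric] by simp
qed

lemma omega_ratio_mono:
  assumes "-1 \<le> s" "-1 \<le> t" "0 < x" "x \<le> y"
  shows "omega_ratio s t x \<le> omega_ratio s t y"
proof -
  have "x / ((x + 1) / 2) \<le> y / ((y + 1) / 2)"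
    using assms by (simp add: field_simps)
  then show ?thesis
    using assms by (simp add: omega_ratio_eq mult_mono powr_mono2)
qed

lemma omega_ratio_antimono:
  assumes "s \<le> -1" "t \<le> -1" "0 < x" "x \<le> y"
  shows "omega_ratio s t y \<le> omega_ratio s t x"
proof -
  have "x / ((x + 1) / 2) \<le> y / ((y + 1) / 2)"
    using assms by (simp add: field_simps)
  then show ?thesis
    using assms by (simp add: omega_ratio_eq mult_mono powr_mono2')
qed

lemma Gamma_ex_le:
  assumes "p \<in> Gamma n" "q \<in> Gamma n" "0 < n"
  shows "\<exists>i<n. p i \<le> q i"
proof (rule ccontr)
  assume "\<not> (\<exists>i<n. p i \<le> q i)"
  then have "(\<Sum>i<n. q i) < (\<Sum>i<n. p i)"
    using \<open>0 < n\<close> by (intro sum_strict_mono) auto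
  with assms show False
    by (simp add: Gamma_def)
qed

theorem theorem4p1:
  fixes n :: nat and p q :: "nat \<Rightarrow> real" and r R s t :: real
  assumes "n \<ge> 2"
    and "p \<in> Gamma n" and "q \<in> Gamma n"
    and "0 < r" and "r \<le> R"
    and "\<forall>i<n. r \<le> p i / q i \<and> p i / q i \<le> R"
  shows "(s \<ge> -1 \<and> t \<ge> -1 \<longrightarrow>
            r powr (t + 1) * ((r + 1) / 2) powr (s - t) * Omega t n p q \<le> Omega s n q p
          \<and> Omega s n q p \<le> R powr (t + 1) * ((R + 1) / 2) powr (s - t) * Omega t n p q)
       \<and> (s \<le> -1 \<and> t \<le> -1 \<longrightarrow>
            R powr (t + 1) * ((R + 1) / 2) powr (s - t) * Omega t n p q \<le> Omega s n q p
          \<and> Omega s n q p \<le> r powr (t + 1) * ((r + 1) / 2) powr (s - t) * Omega t n p q)"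
proof -
  have pos: "0 < p i" "0 < q i" if "i < n" for i
    using assms(2,3) that by (auto simp: Gamma_def)
  obtain i j where "i < n" "p i \<le> q i" "j < n" "q j \<le> p j"
    using Gamma_ex_le[OF assms(2,3)] Gamma_ex_le[OF assms(3,2)] \<open>n \<ge> 2\<close> by auto
  have "r \<le> 1"
    using assms(6) pos \<open>i < n\<close> \<open>p i \<le> q i\<close> by (meson divide_le_eq_1 order_trans)
  have "1 \<le> R"
    using assms(6) pos \<open>j < n\<close> \<open>q j \<le> p j\<close> by (meson le_divide_eq_1 order_trans)
  note comparison = Omega_comparison[OF assms(2,3,4) \<open>r \<le> 1\<close> \<open>1 \<le> R\<close> assms(6)]
  have lower: "m * Omega t n p q \<le> Omega s n q p" if "\<And>x. x \<in> {r..R} \<Longrightarrow> m \<le> omega_ratio s t x" for m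
    using comparison[of m 1] that by simp
  have upper: "Omega s n q p \<le> M * Omega t n p q" if "\<And>x. x \<in> {r..R} \<Longrightarrow> omega_ratio s t x \<le> M" for M
    using comparison[of "- M" "- 1"] that by simp
  have increasing: "omega_ratio s t r * Omega t n p q \<le> Omega s n q p
      \<and> Omega s n q p \<le> omega_ratio s t R * Omega t n p q" if "-1 \<le> s" "-1 \<le> t"
    using that \<open>0 < r\<close> by (intro conjI lower upper omega_ratio_mono) auto
  have decreasing: "omega_ratio s t R * Omega t n p q \<le> Omega s n q p
      \<and> Omega s n q p \<le> omega_ratio s t r * Omega t n p q" if "s \<le> -1" "t \<le> -1"
    using that \<open>0 < r\<close> by (intro conjI lower upper omega_ratio_antimono) auto
  show ?thesis
    using increasing decreasing unfolding omega_ratio_def by blast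
qed

end
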